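(* Let $J\in\mathbb{N}_0$ and let $(a_j)_{j>J}$ be complex numbers with $\sum_{j>J}|a_j|<\infty$ and $|a_j|\ge|a_{j+1}|>0$ for all integers $j>J$. Suppose there is a convex function $\varphi\colon\,]J,\infty[\,\to\mathbb{R}$ with $\varphi(j)=j/|a_j|$ for every integer $j>J$. Then the functions $$f(t)=\sum_{j>J}a_j\exp(i t j/|a_j|),\qquad \operatorname{Re}f(t),\qquad \operatorname{Im}f(t)$$ are continuous on $\mathbb{R}$ but differentiable at no point of $\mathbb{R}$.
   Context: Sums over $j>J$ range over integers $j>J$. *)

theory Defs
  imports "HOL-Analysis.Analysis"
begin

definition nd_series :: "nat \<Rightarrow> (nat \<Rightarrow> complex) \<Rightarrow> real \<Rightarrow> complex" where
  "nd_series J a t = (\<Sum>\<^sub>\<infinity> j\<in>{J<..}. a j * exp (\<i> * complex_of_real (t * real j / norm (a j))))"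

end

theory Submission
  imports Defs
begin

text \<open>
  Suppose \<open>f\<close> had a derivative \<open>D\<close> at \<open>t\<^sub>0\<close>, and write \<open>\<lambda>\<^sub>j = j / \<bar>a\<^sub>j\<bar>\<close>. For a small scale \<open>n\<close>, the
  function \<open>u h = f (t\<^sub>0 + h) * cis (- \<lambda>\<^sub>n h)\<close> is a trigonometric series whose \<open>n\<close>-th frequency is \<open>0\<close>.
  The operator \<open>u \<mapsto> u (\<cdot> + s) + u\<close> multiplies frequency \<open>\<nu>\<close> by \<open>cis (\<nu> s) + 1\<close>, so finitely many such
  shifts annihilate the frequencies of the early terms with large coefficients and all conjugate early
  frequencies, and a doubled shift annihilates the modulated Taylor polynomial \<open>(f t\<^sub>0 + h D) * cis (- \<lambda>\<^sub>n h)\<close>.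
  Averaging twice over a window of length \<open>T = 24 \<bar>a\<^sub>n\<bar>\<close> damps frequency \<open>\<nu>\<close> by a factor at most \<open>4 / (\<nu> T)\<^sup>2\<close>,
  and monotonicity of \<open>\<bar>a\<^sub>j\<bar>\<close> gives \<open>\<bar>\<lambda>\<^sub>j - \<lambda>\<^sub>n\<bar> \<ge> \<bar>j - n\<bar> / \<bar>a\<^sub>n\<bar>\<close>; so the result at \<open>0\<close> is dominated
  by the \<open>n\<close>-th term and has size about \<open>2\<^sup>k \<bar>a\<^sub>n\<bar>\<close> for \<open>k\<close> shifts. On the other hand the operator only
  sees the remainder \<open>f (t\<^sub>0 + h) - f t\<^sub>0 - h D = o(h)\<close> on a window of length \<open>O(\<bar>a\<^sub>n\<bar>)\<close>, which gives
  \<open>o(2\<^sup>k \<bar>a\<^sub>n\<bar>)\<close>. Real and imaginary parts are series of the same shape.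
\<close>

section \<open>Absolutely convergent exponential series\<close>

definition exp_series :: "'i set \<Rightarrow> ('i \<Rightarrow> complex) \<Rightarrow> ('i \<Rightarrow> real) \<Rightarrow> real \<Rightarrow> complex" where
  "exp_series I c \<nu> t = (\<Sum>\<^sub>\<infinity>k\<in>I. c k * cis (\<nu> k * t))"

lemma abs_summable_on_mult_bounded:
  fixes c m :: "'i \<Rightarrow> 'a::real_normed_div_algebra"
  assumes "(\<lambda>k. norm (c k)) summable_on I" and "\<And>k. k \<in> I \<Longrightarrow> norm (m k) \<le> C"
  shows "(\<lambda>k. norm (c k * m k)) summable_on I"
proof (rule summable_on_comparison_test)
  show "(\<lambda>k. C * norm (c k)) summable_on I"
    using assms(1) by (rule summable_on_cmult_right)
  show "norm (c k * m k) \<le> C * norm (c k)" if "k \<in> I" for k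
    using assms(2)[OF that] by (simp add: norm_mult mult.commute[of C] mult_left_mono)
qed simp

lemma exp_series_terms_summable:
  assumes "(\<lambda>k. norm (c k)) summable_on I"
  shows "(\<lambda>k. c k * cis (\<nu> k * t)) summable_on I"
  by (rule abs_summable_summable, rule Infinite_Sum.abs_summable_on_comparison_test'[OF assms]) (simp add: norm_mult)

lemma uniform_limit_exp_series:
  assumes "(\<lambda>k. norm (c k)) summable_on I"
  shows "uniform_limit Y (\<lambda>F t. \<Sum>k\<in>F. c k * cis (\<nu> k * t)) (exp_series I c \<nu>) (finite_subsets_at_top I)"
  unfolding exp_series_def
  by (rule Weierstrass_m_test_general[where M = "\<lambda>k. norm (c k)"]) (use assms in \<open>auto simp: norm_mult\<close>)

lemma continuous_on_exp_series:
  assumes "(\<lambda>k. norm (c k)) summable_on I"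
  shows "continuous_on UNIV (exp_series I c \<nu>)"
  by (rule uniform_limit_theorem[OF _ uniform_limit_exp_series[OF assms]])
     (auto intro!: always_eventually continuous_intros)

lemma exp_series_translate:
  assumes "(\<lambda>k. norm (c k)) summable_on I"
  shows "exp_series I c \<nu> (t + h) * cis (\<omega> * h) = exp_series I (\<lambda>k. c k * cis (\<nu> k * t)) (\<lambda>k. \<nu> k + \<omega>) h"
proof -
  have "exp_series I c \<nu> (t + h) * cis (\<omega> * h) = (\<Sum>\<^sub>\<infinity>k\<in>I. c k * cis (\<nu> k * (t + h)) * cis (\<omega> * h))"
    unfolding exp_series_def by (rule infsum_cmult_left'[symmetric])
  also have "\<dots> = exp_series I (\<lambda>k. c k * cis (\<nu> k * t)) (\<lambda>k. \<nu> k + \<omega>) h"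
    unfolding exp_series_def by (intro infsum_cong) (simp add: cis_mult[symmetric] algebra_simps)
  finally show ?thesis .
qed

lemma summable_on_Plus:
  fixes f :: "'a + 'b \<Rightarrow> 'c::topological_comm_monoid_add"
  assumes "(f \<circ> Inl) summable_on A" and "(f \<circ> Inr) summable_on B"
  shows "f summable_on (A <+> B)"
proof -
  have "f summable_on Inl ` A" "f summable_on Inr ` B"
    using assms by (simp_all add: summable_on_reindex)
  then show ?thesis unfolding Plus_def by (rule summable_on_Un_disjoint) auto
qed

lemma infsum_Plus:
  fixes f :: "'a + 'b \<Rightarrow> 'c::{topological_comm_monoid_add, t2_space}"
  assumes "(f \<circ> Inl) summable_on A" and "(f \<circ> Inr) summable_on B"
  shows "infsum f (A <+> B) = infsum (f \<circ> Inl) A + infsum (f \<circ> Inr) B"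
proof -
  have "f summable_on Inl ` A" "f summable_on Inr ` B"
    using assms by (simp_all add: summable_on_reindex)
  then show ?thesis unfolding Plus_def by (subst infsum_Un_disjoint) (auto simp: infsum_reindex)
qed

lemma of_real_Re_infsum:
  fixes f :: "'a \<Rightarrow> complex"
  assumes "f summable_on A"
  shows "complex_of_real (Re (infsum f A)) = (\<Sum>\<^sub>\<infinity>x\<in>A. (f x + cnj (f x)) / 2)"
proof -
  have "((\<lambda>x. (f x + cnj (f x)) / 2) has_sum ((infsum f A + cnj (infsum f A)) / 2)) A"
    using assms by (intro has_sum_divide_const has_sum_add) (simp_all add: has_sum_infsum)
  then show ?thesis by (simp add: infsumI complex_add_cnj)
qed

lemma of_real_Im_infsum:
  fixes f :: "'a \<Rightarrow> complex"
  assumes "f summable_on A"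
  shows "complex_of_real (Im (infsum f A)) = (\<Sum>\<^sub>\<infinity>x\<in>A. (f x - cnj (f x)) / (2 * \<i>))"
proof -
  have "((\<lambda>x. (f x - cnj (f x)) / (2 * \<i>)) has_sum ((infsum f A - cnj (infsum f A)) / (2 * \<i>))) A"
    using assms has_sum_add[OF has_sum_infsum has_sum_uminusI[of "\<lambda>x. cnj (f x)"]]
    by (intro has_sum_divide_const) (simp_all add: has_sum_infsum)
  then show ?thesis by (simp add: infsumI complex_diff_cnj algebra_simps)
qed

lemma differentiable_of_real_comp:
  fixes f :: "real \<Rightarrow> real"
  assumes "f differentiable (at t)"
  shows "(\<lambda>s. complex_of_real (f s)) differentiable (at t)"
  using differentiable_chain_at[OF assms of_real_differentiable] by (simp add: o_def)

lemma exp_series_Plus: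
  assumes "(\<lambda>k. norm (\<alpha> k)) summable_on A" and "(\<lambda>k. norm (\<beta> k)) summable_on A"
  shows "exp_series (A <+> A) (case_sum \<alpha> \<beta>) (case_sum \<mu> \<mu>') t
      = (\<Sum>\<^sub>\<infinity>j\<in>A. \<alpha> j * cis (\<mu> j * t) + \<beta> j * cis (\<mu>' j * t))"
proof -
  have \<alpha>: "(\<lambda>j. \<alpha> j * cis (\<mu> j * t)) summable_on A" and \<beta>: "(\<lambda>j. \<beta> j * cis (\<mu>' j * t)) summable_on A"
    using assms by (simp_all add: exp_series_terms_summable)
  have "exp_series (A <+> A) (case_sum \<alpha> \<beta>) (case_sum \<mu> \<mu>') t
      = (\<Sum>\<^sub>\<infinity>j\<in>A. \<alpha> j * cis (\<mu> j * t)) + (\<Sum>\<^sub>\<infinity>j\<in>A. \<beta> j * cis (\<mu>' j * t))"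
    unfolding exp_series_def using \<alpha> \<beta> by (subst infsum_Plus) (simp_all add: o_def)
  also have "\<dots> = (\<Sum>\<^sub>\<infinity>j\<in>A. \<alpha> j * cis (\<mu> j * t) + \<beta> j * cis (\<mu>' j * t))"
    by (rule infsum_add[symmetric, OF \<alpha> \<beta>])
  finally show ?thesis .
qed

lemma twin_series_modulate:
  assumes "(\<lambda>j. norm (\<alpha> j)) summable_on A" and "(\<lambda>j. norm (\<beta> j)) summable_on A"
  shows "(\<Sum>\<^sub>\<infinity>j\<in>A. \<alpha> j * cis (\<mu> j * (t + h)) + \<beta> j * cis (- \<mu> j * (t + h))) * cis (- \<omega> * h)
      = exp_series (A <+> A) (case_sum (\<lambda>j. \<alpha> j * cis (\<mu> j * t)) (\<lambda>j. \<beta> j * cis (- \<mu> j * t)))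
          (case_sum (\<lambda>j. \<mu> j - \<omega>) (\<lambda>j. - \<mu> j - \<omega>)) h"
proof -
  have summ: "(\<lambda>k. norm (case_sum \<alpha> \<beta> k)) summable_on (A <+> A)"
    using assms by (intro summable_on_Plus) (simp_all add: o_def)
  have c: "(\<lambda>k. case_sum \<alpha> \<beta> k * cis (case_sum \<mu> (\<lambda>j. - \<mu> j) k * t))
      = case_sum (\<lambda>j. \<alpha> j * cis (\<mu> j * t)) (\<lambda>j. \<beta> j * cis (- \<mu> j * t))"
    and \<nu>: "(\<lambda>k. case_sum \<mu> (\<lambda>j. - \<mu> j) k + - \<omega>) = case_sum (\<lambda>j. \<mu> j - \<omega>) (\<lambda>j. - \<mu> j - \<omega>)"
    by (simp_all add: fun_eq_iff split: sum.split)
  have "(\<Sum>\<^sub>\<infinity>j\<in>A. \<alpha> j * cis (\<mu> j * (t + h)) + \<beta> j * cis (- \<mu> j * (t + h)))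
      = exp_series (A <+> A) (case_sum \<alpha> \<beta>) (case_sum \<mu> (\<lambda>j. - \<mu> j)) (t + h)"
    by (rule exp_series_Plus[symmetric, OF assms])
  then show ?thesis
    using exp_series_translate[OF summ, of _ t h "- \<omega>"] by (simp only: c \<nu>)
qed

section \<open>Averages and shifts\<close>

definition cis_mean :: "real \<Rightarrow> complex" where
  "cis_mean x = (if x = 0 then 1 else (cis x - 1) / (\<i> * of_real x))"

lemma cis_mean_0 [simp]: "cis_mean 0 = 1"
  by (simp add: cis_mean_def)

lemma has_integral_cis:
  assumes "T > 0"
  shows "((\<lambda>x. cis (\<nu> * (h + x))) has_integral (of_real T * cis_mean (\<nu> * T) * cis (\<nu> * h))) {0..T}"
proof (cases "\<nu> = 0")
  case True
  then show ?thesis using has_integral_const_real[of "1::complex" 0 T] assms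
    by (simp add: scaleR_conv_of_real)
next
  case False
  have "((\<lambda>x. cis (\<nu> * (h + x)) / (\<i> * of_real \<nu>)) has_vector_derivative cis (\<nu> * (h + x))) (at x within {0..T})" for x
    unfolding has_vector_derivative_def using False
    by (auto intro!: derivative_eq_intros has_derivative_cis simp: scaleR_conv_of_real field_simps)
  then have "((\<lambda>x. cis (\<nu> * (h + x))) has_integral
      (cis (\<nu> * (h + T)) / (\<i> * of_real \<nu>) - cis (\<nu> * (h + 0)) / (\<i> * of_real \<nu>))) {0..T}"
    using assms by (intro fundamental_theorem_of_calculus) auto
  moreover have "cis (\<nu> * (h + T)) / (\<i> * of_real \<nu>) - cis (\<nu> * (h + 0)) / (\<i> * of_real \<nu>)
      = of_real T * cis_mean (\<nu> * T) * cis (\<nu> * h)"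
    using False assms by (simp add: cis_mean_def distrib_left cis_mult[symmetric] field_simps)
  ultimately show ?thesis by simp
qed

lemma norm_cis_mean_le_1: "norm (cis_mean x) \<le> 1"
proof (cases "x = 0")
  case False
  then have T: "\<bar>x\<bar> > 0" by simp
  have "((\<lambda>y. cis (sgn x * (0 + y))) has_integral (of_real \<bar>x\<bar> * cis_mean x)) {0..\<bar>x\<bar>}"
    using has_integral_cis[OF T, of "sgn x" 0] by (simp add: sgn_mult_abs)
  then have "norm (of_real \<bar>x\<bar> * cis_mean x) \<le> 1 * Henstock_Kurzweil_Integration.content {0..\<bar>x\<bar>}"
    by (rule has_integral_bound_real[where S="{}", rotated 2]) auto
  then show ?thesis using T by (simp add: norm_mult)
qed simp

lemma norm_cis_mean_le:
  assumes "x \<noteq> 0"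
  shows "norm (cis_mean x) \<le> 2 / \<bar>x\<bar>"
proof -
  have "norm (cis x - 1) \<le> 2"
    using norm_triangle_ineq4[of "cis x" 1] by simp
  then show ?thesis using assms by (simp add: cis_mean_def norm_divide norm_mult divide_right_mono)
qed

lemma norm_cis_mean_sq_le:
  assumes "d > 0" and "24 * d \<le> \<bar>x\<bar>"
  shows "norm (cis_mean x ^ 2) \<le> 1 / (144 * d\<^sup>2)"
proof -
  have "norm (cis_mean x ^ 2) \<le> (2 / \<bar>x\<bar>)\<^sup>2"
    unfolding norm_power using assms norm_cis_mean_le[of x] by (intro power_mono) auto
  also have "\<dots> \<le> (2 / (24 * d))\<^sup>2"
    using assms by (intro power_mono divide_left_mono) auto
  finally show ?thesis by (simp add: power2_eq_square)
qed

definition average :: "real \<Rightarrow> (real \<Rightarrow> complex) \<Rightarrow> real \<Rightarrow> complex" where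
  "average T u h = integral {0..T} (\<lambda>x. u (h + x)) / of_real T"

lemma norm_average_le:
  assumes "T > 0" and "\<And>x. h \<le> x \<Longrightarrow> x \<le> h + T \<Longrightarrow> norm (u x) \<le> M"
  shows "norm (average T u h) \<le> M"
proof -
  have "M \<ge> 0" using assms(2)[of h] assms(1) norm_ge_zero[of "u h"] by linarith
  have "norm (integral {0..T} (\<lambda>x. u (h + x))) \<le> M * Henstock_Kurzweil_Integration.content {0..T}"
  proof (cases "(\<lambda>x. u (h + x)) integrable_on {0..T}")
    case True
    then show ?thesis
      by (intro has_integral_bound_real[OF \<open>M \<ge> 0\<close> finite.emptyI integrable_integral[OF True]])
         (use assms(2) in auto)
  qed (use \<open>M \<ge> 0\<close> assms(1) in \<open>simp add: not_integrable_integral\<close>)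
  then show ?thesis using assms(1) by (simp add: average_def norm_divide pos_divide_le_eq)
qed

lemma average_exp_series:
  assumes c: "(\<lambda>k. norm (c k)) summable_on I" and "T > 0"
  shows "average T (exp_series I c \<nu>) = exp_series I (\<lambda>k. c k * cis_mean (\<nu> k * T)) \<nu>"
proof
  fix h
  define d where "d k = c k * cis_mean (\<nu> k * T) * cis (\<nu> k * h)" for k
  obtain S Jv where S: "\<And>F. ((\<lambda>x. \<Sum>k\<in>F. c k * cis (\<nu> k * (h + x))) has_integral S F) {0..T}"
    and Jv: "((\<lambda>x. exp_series I c \<nu> (h + x)) has_integral Jv) {0..T}"
    and lim: "(S \<longlongrightarrow> Jv) (finite_subsets_at_top I)"
  proof (rule uniform_limit_integral)
    show "uniform_limit {0..T} (\<lambda>F x. \<Sum>k\<in>F. c k * cis (\<nu> k * (h + x))) (\<lambda>x. exp_series I c \<nu> (h + x))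
        (finite_subsets_at_top I)"
      unfolding exp_series_def
      by (rule Weierstrass_m_test_general[where M = "\<lambda>k. norm (c k)"]) (use c in \<open>auto simp: norm_mult\<close>)
  qed (auto intro!: continuous_intros)
  have "((\<lambda>x. c k * cis (\<nu> k * (h + x))) has_integral (of_real T * d k)) {0..T}" for k
    using has_integral_mult_right[OF has_integral_cis[OF \<open>T > 0\<close>, of "\<nu> k" h], of "c k"]
    by (simp add: d_def ac_simps)
  then have SF: "S F = (\<Sum>k\<in>F. of_real T * d k)" if "finite F" for F
    by (intro has_integral_unique[OF S] has_integral_sum[OF that])
  have "((\<lambda>k. of_real T * d k) has_sum Jv) I"
    unfolding has_sum_def
    by (rule tendsto_cong[THEN iffD1, OF _ lim]) (auto simp: SF intro!: eventually_finite_subsets_at_top_weakI)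
  then have "((\<lambda>k. inverse (of_real T) * (of_real T * d k)) has_sum (inverse (of_real T) * Jv)) I"
    by (rule has_sum_cmult_right)
  then have "(d has_sum (Jv / of_real T)) I"
    using \<open>T > 0\<close> by (simp add: field_simps)
  then show "average T (exp_series I c \<nu>) h = exp_series I (\<lambda>k. c k * cis_mean (\<nu> k * T)) \<nu> h"
    unfolding average_def exp_series_def d_def using integral_unique[OF Jv[unfolded exp_series_def]]
    by (simp add: infsumI mult.assoc)
qed

fun shift_sum :: "real list \<Rightarrow> (real \<Rightarrow> complex) \<Rightarrow> real \<Rightarrow> complex" where
  "shift_sum [] u = u"
| "shift_sum (s # S) u = (\<lambda>h. shift_sum S u (h + s) + shift_sum S u h)"

definition shift_factor :: "real list \<Rightarrow> real \<Rightarrow> complex" where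
  "shift_factor S \<nu> = (\<Prod>s\<leftarrow>S. cis (\<nu> * s) + 1)"

lemma shift_factor_Nil [simp]: "shift_factor [] \<nu> = 1"
  and shift_factor_Cons [simp]: "shift_factor (s # S) \<nu> = (cis (\<nu> * s) + 1) * shift_factor S \<nu>"
  by (simp_all add: shift_factor_def)

lemma shift_factor_0 [simp]: "shift_factor S 0 = 2 ^ length S"
  by (induction S) auto

lemma norm_shift_factor_le: "norm (shift_factor S \<nu>) \<le> 2 ^ length S"
proof (induction S)
  case (Cons s S)
  have "norm (cis (\<nu> * s) + 1) \<le> 2"
    using norm_triangle_ineq[of "cis (\<nu> * s)" 1] by simp
  with Cons show ?case by (simp add: norm_mult mult_mono)
qed simp

lemma shift_factor_eq_0:
  assumes "s \<in> set S" and "cis (\<nu> * s) = -1"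
  shows "shift_factor S \<nu> = 0"
  using assms by (induction S) auto

lemma shift_sum_exp_series:
  assumes c: "(\<lambda>k. norm (c k)) summable_on I"
  shows "shift_sum S (exp_series I c \<nu>) = exp_series I (\<lambda>k. c k * shift_factor S (\<nu> k)) \<nu>"
proof (induction S)
  case (Cons s S)
  let ?c = "\<lambda>k. c k * shift_factor S (\<nu> k)"
  have c': "(\<lambda>k. norm (?c k)) summable_on I"
    by (rule abs_summable_on_mult_bounded[OF c norm_shift_factor_le])
  have "shift_sum (s # S) (exp_series I c \<nu>) h = exp_series I ?c \<nu> (h + s) + exp_series I ?c \<nu> h" for h
    by (simp add: Cons)
  also have "\<dots> h = (\<Sum>\<^sub>\<infinity>k\<in>I. ?c k * cis (\<nu> k * (h + s)) + ?c k * cis (\<nu> k * h))" for h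
    unfolding exp_series_def by (rule infsum_add[symmetric]) (use exp_series_terms_summable[OF c'] in auto)
  also have "\<dots> h = exp_series I (\<lambda>k. c k * shift_factor (s # S) (\<nu> k)) \<nu> h" for h
    unfolding exp_series_def by (intro infsum_cong) (simp add: distrib_left cis_mult[symmetric] algebra_simps)
  finally show ?case by blast
qed simp

lemma shift_sum_add: "shift_sum S (\<lambda>h. u h + v h) = (\<lambda>h. shift_sum S u h + shift_sum S v h)"
  by (induction S) (auto simp: fun_eq_iff)

lemma shift_sum_append_annihilates:
  assumes "shift_sum S' u = (\<lambda>h. 0)"
  shows "shift_sum (S @ S') u = (\<lambda>h. 0)"
  using assms by (induction S) auto

lemma norm_shift_sum_le:
  assumes "\<forall>s\<in>set S. s \<ge> 0" and "\<And>x. h \<le> x \<Longrightarrow> x \<le> h + sum_list S \<Longrightarrow> norm (u x) \<le> M"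
  shows "norm (shift_sum S u h) \<le> 2 ^ length S * M"
  using assms
proof (induction S arbitrary: h)
  case (Cons s S)
  have "sum_list S \<ge> 0" using Cons.prems(1) by (simp add: sum_list_nonneg)
  then have "norm (shift_sum S u (h + s)) \<le> 2 ^ length S * M" "norm (shift_sum S u h) \<le> 2 ^ length S * M"
    using Cons by (auto intro!: Cons.IH)
  then show ?case using norm_triangle_ineq[of "shift_sum S u (h + s)" "shift_sum S u h"] by simp
qed simp

text \<open>The pair of shifts \<open>s, s\<close> acts on \<open>p h * cis (\<nu> * h)\<close> as a second difference of \<open>p\<close>, which vanishes for linear \<open>p\<close>.\<close>
lemma shift_sum_linear_cis:
  assumes "cis (\<nu> * s) = -1"
  shows "shift_sum [s, s] (\<lambda>h. (A + of_real h * B) * cis (\<nu> * h)) = (\<lambda>h. 0)"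
proof
  fix h
  have "cis (\<nu> * (x + s)) = - cis (\<nu> * x)" for x
    using assms by (simp add: distrib_left cis_mult[symmetric])
  from this[of h] this[of "h + s"] show "shift_sum [s, s] (\<lambda>h. (A + of_real h * B) * cis (\<nu> * h)) h = 0"
    by (simp add: algebra_simps)
qed

definition smoothing :: "real list \<Rightarrow> real \<Rightarrow> (real \<Rightarrow> complex) \<Rightarrow> real \<Rightarrow> complex" where
  "smoothing S T u = average T (average T (shift_sum S u))"

lemma smoothing_exp_series:
  assumes c: "(\<lambda>k. norm (c k)) summable_on I" and "T > 0"
  shows "smoothing S T (exp_series I c \<nu>)
      = exp_series I (\<lambda>k. c k * (shift_factor S (\<nu> k) * cis_mean (\<nu> k * T) ^ 2)) \<nu>"
proof -
  let ?c1 = "\<lambda>k. c k * shift_factor S (\<nu> k)"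
  let ?c2 = "\<lambda>k. ?c1 k * cis_mean (\<nu> k * T)"
  have c1: "(\<lambda>k. norm (?c1 k)) summable_on I"
    by (rule abs_summable_on_mult_bounded[OF c norm_shift_factor_le])
  have c2: "(\<lambda>k. norm (?c2 k)) summable_on I"
    by (rule abs_summable_on_mult_bounded[OF c1 norm_cis_mean_le_1])
  show ?thesis
    unfolding smoothing_def shift_sum_exp_series[OF c] average_exp_series[OF c1 \<open>T > 0\<close>]
      average_exp_series[OF c2 \<open>T > 0\<close>]
    by (simp add: power2_eq_square mult.assoc)
qed

lemma norm_smoothing_le:
  assumes "\<forall>s\<in>set S. s \<ge> 0" and "T > 0"
    and "\<And>x. h \<le> x \<Longrightarrow> x \<le> h + sum_list S + 2 * T \<Longrightarrow> norm (u x) \<le> M"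
  shows "norm (smoothing S T u h) \<le> 2 ^ length S * M"
  unfolding smoothing_def using assms(2)
proof (intro norm_average_le)
  fix x y assume "h \<le> x" "x \<le> h + T" "x \<le> y" "y \<le> x + T"
  then show "norm (shift_sum S u y) \<le> 2 ^ length S * M"
    by (intro norm_shift_sum_le[OF assms(1)] assms(3)) auto
qed

section \<open>Sums of inverse squares\<close>

lemma norm_infsum_le_finite_sums:
  fixes f :: "'a \<Rightarrow> 'b::banach"
  assumes "\<And>F. finite F \<Longrightarrow> F \<subseteq> A \<Longrightarrow> (\<Sum>x\<in>F. norm (f x)) \<le> b"
  shows "norm (infsum f A) \<le> b"
proof -
  have "(\<lambda>x. norm (f x)) summable_on A"
    using assms by (intro nonneg_bdd_above_summable_on) (auto simp: bdd_above_def)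
  then have "norm (infsum f A) \<le> infsum (\<lambda>x. norm (f x)) A"
    by (rule norm_infsum_bound)
  also have "\<dots> \<le> b"
    using \<open>(\<lambda>x. norm (f x)) summable_on A\<close> assms by (rule infsum_le_finite_sums)
  finally show ?thesis .
qed

lemma sum_inverse_squares_le:
  assumes "finite F"
  shows "(\<Sum>i\<in>F. 1 / (real i + 1)\<^sup>2) \<le> 2"
proof -
  have sums: "(\<lambda>i. 1 / (real i + 1)\<^sup>2) sums (pi\<^sup>2 / 6)"
    using inverse_squares_sums by (simp add: add.commute)
  have "(\<Sum>i\<in>F. 1 / (real i + 1)\<^sup>2) \<le> (\<Sum>i. 1 / (real i + 1)\<^sup>2)"
    using sums assms by (intro sum_le_suminf) (auto simp: sums_iff)
  also have "\<dots> = pi\<^sup>2 / 6"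
    using sums by (simp add: sums_iff)
  also have "\<dots> \<le> 2"
  proof -
    have "pi\<^sup>2 \<le> (16 / 5)\<^sup>2"
      using pi_approx(2) by (intro power_mono) auto
    then show ?thesis by (simp add: power2_eq_square)
  qed
  finally show ?thesis .
qed

text \<open>Both halves \<open>j < n\<close> and \<open>j > n\<close> reindex injectively onto a sum of \<open>1 / (i + 1)\<^sup>2\<close>.\<close>
lemma sum_inverse_squares_diff_le:
  assumes "finite F" and "n \<notin> F"
  shows "(\<Sum>j\<in>F. 1 / (real j - real n)\<^sup>2) \<le> 4"
proof -
  have F: "F = {j\<in>F. j < n} \<union> {j\<in>F. n < j}"
    using assms(2) by auto (metis linorder_neqE_nat)
  have below: "(\<Sum>j\<in>{j\<in>F. j < n}. 1 / (real j - real n)\<^sup>2) \<le> 2"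
  proof -
    have "(\<Sum>j\<in>{j\<in>F. j < n}. 1 / (real j - real n)\<^sup>2) = (\<Sum>i\<in>(\<lambda>j. n - Suc j) ` {j\<in>F. j < n}. 1 / (real i + 1)\<^sup>2)"
      by (subst sum.reindex) (auto simp: inj_on_def of_nat_diff power2_commute intro!: sum.cong)
    then show ?thesis using sum_inverse_squares_le assms(1) by simp
  qed
  have above: "(\<Sum>j\<in>{j\<in>F. n < j}. 1 / (real j - real n)\<^sup>2) \<le> 2"
  proof -
    have "(\<Sum>j\<in>{j\<in>F. n < j}. 1 / (real j - real n)\<^sup>2) = (\<Sum>i\<in>(\<lambda>j. j - Suc n) ` {j\<in>F. n < j}. 1 / (real i + 1)\<^sup>2)"
      by (subst sum.reindex) (auto simp: inj_on_def of_nat_diff intro!: sum.cong)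
    then show ?thesis using sum_inverse_squares_le assms(1) by simp
  qed
  have "(\<Sum>j\<in>F. 1 / (real j - real n)\<^sup>2)
      = (\<Sum>j\<in>{j\<in>F. j < n}. 1 / (real j - real n)\<^sup>2) + (\<Sum>j\<in>{j\<in>F. n < j}. 1 / (real j - real n)\<^sup>2)"
    using assms(1) by (subst F, subst sum.union_disjoint) auto
  with below above show ?thesis by linarith
qed

lemma norm_infsum_le_inverse_gap_squares:
  fixes u :: "nat \<Rightarrow> complex"
  assumes "n \<notin> X" and "K \<ge> 0" and "\<And>j. j \<in> X \<Longrightarrow> norm (u j) \<le> K / (real j - real n)\<^sup>2"
  shows "norm (\<Sum>\<^sub>\<infinity>j\<in>X. u j) \<le> 4 * K"
proof (rule norm_infsum_le_finite_sums)
  fix F assume "finite F" "F \<subseteq> X"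
  then have "(\<Sum>j\<in>F. norm (u j)) \<le> K * (\<Sum>j\<in>F. 1 / (real j - real n)\<^sup>2)"
    unfolding sum_distrib_left by (intro sum_mono) (use assms(3) in auto)
  also have "\<dots> \<le> K * 4"
    using assms \<open>finite F\<close> \<open>F \<subseteq> X\<close> by (intro mult_left_mono sum_inverse_squares_diff_le) auto
  finally show "(\<Sum>j\<in>F. norm (u j)) \<le> 4 * K" by simp
qed

lemma norm_infsum_le_inverse_sum_squares:
  fixes v :: "nat \<Rightarrow> complex"
  assumes "n \<ge> 1" and "K \<ge> 0" and "\<And>j. j \<in> X \<Longrightarrow> norm (v j) \<le> K / (real j + real n)\<^sup>2"
  shows "norm (\<Sum>\<^sub>\<infinity>j\<in>X. v j) \<le> 2 * K"
proof (rule norm_infsum_le_finite_sums)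
  fix F assume "finite F" "F \<subseteq> X"
  have "norm (v j) \<le> K * (1 / (real j + 1)\<^sup>2)" if "j \<in> F" for j
  proof -
    have "1 / (real j + real n)\<^sup>2 \<le> 1 / (real j + 1)\<^sup>2"
      using assms(1) by (intro divide_left_mono power_mono) auto
    then show ?thesis
      using assms(3)[of j] that \<open>F \<subseteq> X\<close> mult_left_mono[OF _ assms(2)] by fastforce
  qed
  then have "(\<Sum>j\<in>F. norm (v j)) \<le> K * (\<Sum>j\<in>F. 1 / (real j + 1)\<^sup>2)"
    unfolding sum_distrib_left by (rule sum_mono)
  also have "\<dots> \<le> K * 2"
    using assms(2) \<open>finite F\<close> by (intro mult_left_mono sum_inverse_squares_le) auto
  finally show "(\<Sum>j\<in>F. norm (v j)) \<le> 2 * K" by simp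
qed

lemma norm_infsum_ge_dominant_term:
  fixes u v :: "nat \<Rightarrow> complex"
  assumes u: "u summable_on X" and v: "v summable_on X" and "n \<in> X" and "n \<ge> 1"
    and u_le: "\<And>j. j \<in> X \<Longrightarrow> j \<noteq> n \<Longrightarrow> norm (u j) \<le> K / (real j - real n)\<^sup>2"
    and v_le: "\<And>j. j \<in> X \<Longrightarrow> norm (v j) \<le> K / (real j + real n)\<^sup>2"
  shows "norm (u n) - 6 * K \<le> norm (\<Sum>\<^sub>\<infinity>j\<in>X. u j + v j)"
proof -
  have "0 \<le> K / (real n + real n)\<^sup>2"
    using v_le[OF \<open>n \<in> X\<close>] norm_ge_zero order_trans by blast
  then have "K \<ge> 0" using \<open>n \<ge> 1\<close> by (simp add: zero_le_divide_iff)
  have u': "u summable_on (X - {n})"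
    using u by (rule summable_on_subset_banach) auto
  have "(\<Sum>\<^sub>\<infinity>j\<in>X. u j + v j) = u n + ((\<Sum>\<^sub>\<infinity>j\<in>X - {n}. u j) + (\<Sum>\<^sub>\<infinity>j\<in>X. v j))"
    using infsum_insert[OF u', of n] insert_Diff[OF \<open>n \<in> X\<close>] by (simp add: infsum_add[OF u v])
  moreover have "norm (\<Sum>\<^sub>\<infinity>j\<in>X - {n}. u j) \<le> 4 * K"
    using \<open>K \<ge> 0\<close> u_le by (intro norm_infsum_le_inverse_gap_squares) auto
  moreover have "norm (\<Sum>\<^sub>\<infinity>j\<in>X. v j) \<le> 2 * K"
    using \<open>n \<ge> 1\<close> \<open>K \<ge> 0\<close> v_le by (rule norm_infsum_le_inverse_sum_squares)
  ultimately show ?thesis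
    using norm_triangle_ineq4[of "u n + ((\<Sum>\<^sub>\<infinity>j\<in>X - {n}. u j) + (\<Sum>\<^sub>\<infinity>j\<in>X. v j))" "(\<Sum>\<^sub>\<infinity>j\<in>X - {n}. u j) + (\<Sum>\<^sub>\<infinity>j\<in>X. v j)"]
      norm_triangle_ineq[of "\<Sum>\<^sub>\<infinity>j\<in>X - {n}. u j" "\<Sum>\<^sub>\<infinity>j\<in>X. v j"]
    by simp
qed

section \<open>Smoothing the series at the scale of a single term\<close>

definition freq :: "(nat \<Rightarrow> complex) \<Rightarrow> nat \<Rightarrow> real" where
  "freq a j = real j / norm (a j)"

lemma nd_series_eq: "nd_series J a t = (\<Sum>\<^sub>\<infinity>j\<in>{J<..}. a j * cis (freq a j * t))"
  unfolding nd_series_def freq_def cis_conv_exp by (simp add: ac_simps)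

text \<open>A shift by \<open>pi / \<bar>\<nu>\<bar>\<close> annihilates the frequency \<open>\<nu>\<close>; after
  modulation by \<open>cis (- freq a n * h)\<close>, the first block removes the frequencies of the early terms with
  \<open>norm (a m) > 2 * norm (a n)\<close>, the second removes the conjugate frequencies of all early terms, and
  the final pair removes the linear Taylor polynomial of the function at the point.\<close>
definition killing_shifts :: "nat \<Rightarrow> (nat \<Rightarrow> complex) \<Rightarrow> nat \<Rightarrow> real list" where
  "killing_shifts J a n =
     map (\<lambda>m. pi / (freq a n - freq a m)) (filter (\<lambda>m. 2 * norm (a n) < norm (a m)) [Suc J..<n])
     @ map (\<lambda>m. pi / (freq a m + freq a n)) [Suc J..<n] @ [pi / freq a n, pi / freq a n]"

text \<open>The window is chosen so that the modulated frequency \<open>\<nu>\<close> of the \<open>j\<close>-th term has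
  \<open>\<bar>\<nu> * 24 * norm (a n)\<bar> \<ge> 24 * \<bar>j - n\<bar>\<close>.\<close>
definition gain :: "nat \<Rightarrow> (nat \<Rightarrow> complex) \<Rightarrow> nat \<Rightarrow> real \<Rightarrow> complex" where
  "gain J a n \<nu> = shift_factor (killing_shifts J a n) \<nu> * cis_mean (\<nu> * (24 * norm (a n))) ^ 2"

lemma norm_mult_gain_le:
  assumes "norm c \<le> A" and "d > 0" and "24 * d \<le> \<bar>\<nu> * (24 * norm (a n))\<bar>"
  shows "norm (c * gain J a n \<nu>) \<le> A * 2 ^ length (killing_shifts J a n) / (144 * d\<^sup>2)"
proof -
  have "norm (c * gain J a n \<nu>)
      = norm c * norm (shift_factor (killing_shifts J a n) \<nu>) * norm (cis_mean (\<nu> * (24 * norm (a n))) ^ 2)"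
    by (simp add: gain_def norm_mult)
  also have "\<dots> \<le> A * 2 ^ length (killing_shifts J a n) * (1 / (144 * d\<^sup>2))"
  proof -
    have "A \<ge> 0" using assms(1) norm_ge_zero order_trans by blast
    then show ?thesis using assms(1) norm_shift_factor_le norm_cis_mean_sq_le[OF assms(2,3)]
      by (intro mult_mono) auto
  qed
  finally show ?thesis by simp
qed

lemma norm_gain_le: "norm (gain J a n \<nu>) \<le> 2 ^ length (killing_shifts J a n)"
proof -
  have "norm (cis_mean (\<nu> * (24 * norm (a n))) ^ 2) \<le> 1"
    unfolding norm_power using norm_cis_mean_le_1 by (simp add: power_le_one)
  from mult_mono[OF norm_shift_factor_le this] show ?thesis
    unfolding gain_def norm_mult by simp
qed

context
  fixes J :: nat and a :: "nat \<Rightarrow> complex"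
  assumes mono: "\<And>j. j > J \<Longrightarrow> norm (a j) \<ge> norm (a (Suc j)) \<and> norm (a (Suc j)) > 0"
begin

lemma norm_coeff_pos: "J < j \<Longrightarrow> norm (a j) > 0"
  using mono[of j] by linarith

lemma norm_coeff_antimono:
  assumes "J < i" and "i \<le> j"
  shows "norm (a j) \<le> norm (a i)"
  using assms(2)
proof (induction j rule: dec_induct)
  case (step m)
  then show ?case using mono[of m] assms(1) by linarith
qed simp

lemma freq_pos: "J < j \<Longrightarrow> freq a j > 0"
  using norm_coeff_pos[of j] by (simp add: freq_def)

lemma freq_ge:
  assumes "J < n" and "n \<le> j"
  shows "real j / norm (a n) \<le> freq a j"
  unfolding freq_def using norm_coeff_antimono[OF assms] norm_coeff_pos[of j] norm_coeff_pos[of n] assms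
  by (intro divide_left_mono) auto

lemma freq_le:
  assumes "J < j" and "j \<le> n"
  shows "freq a j \<le> real j / norm (a n)"
  unfolding freq_def using norm_coeff_antimono[OF assms] norm_coeff_pos[of j] norm_coeff_pos[of n] assms
  by (intro divide_left_mono) auto

lemma freq_diff_ge:
  assumes "J < n" and "J < j"
  shows "\<bar>real j - real n\<bar> \<le> \<bar>freq a j - freq a n\<bar> * norm (a n)"
proof -
  have "\<bar>real j - real n\<bar> / norm (a n) \<le> \<bar>freq a j - freq a n\<bar>"
  proof (cases "n \<le> j")
    case True
    then show ?thesis
      using freq_ge[OF assms(1) True] by (simp add: freq_def[of a n] diff_divide_distrib)
  next
    case False
    then show ?thesis
      using freq_le[OF assms(2), of n] by (simp add: freq_def[of a n] diff_divide_distrib)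
  qed
  then show ?thesis using norm_coeff_pos[OF assms(1)] by (simp add: pos_divide_le_eq)
qed

lemma freq_add_ge:
  assumes "J < n" and "n \<le> j"
  shows "real j + real n \<le> (freq a j + freq a n) * norm (a n)"
proof -
  have "(real j + real n) / norm (a n) \<le> freq a j + freq a n"
    using freq_ge[OF assms] by (simp add: freq_def[of a n] add_divide_distrib)
  then show ?thesis using norm_coeff_pos[OF assms(1)] by (simp add: pos_divide_le_eq)
qed

lemma freq_lt_half:
  assumes "J < m" and "m < n" and "2 * norm (a n) < norm (a m)"
  shows "freq a m < freq a n / 2"
proof -
  have "freq a m \<le> real n / norm (a m)"
    unfolding freq_def using assms norm_coeff_pos[of m] by (intro divide_right_mono) auto
  also have "\<dots> < real n / (2 * norm (a n))"
    using assms norm_coeff_pos[of m] norm_coeff_pos[of n] by (intro divide_strict_left_mono) auto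
  finally show ?thesis by (simp add: freq_def)
qed

lemma killing_shifts_nonneg:
  assumes "J < n"
  shows "\<forall>s\<in>set (killing_shifts J a n). 0 \<le> s"
proof -
  have "0 \<le> pi / (freq a n - freq a m)" if "J < m" "m < n" "2 * norm (a n) < norm (a m)" for m
    using freq_lt_half[OF that] freq_pos[OF assms] by simp
  moreover have "0 \<le> pi / (freq a m + freq a n)" if "J < m" for m
    using freq_pos[OF that] freq_pos[OF assms] by simp
  ultimately show ?thesis
    using freq_pos[OF assms] by (auto simp: killing_shifts_def)
qed

lemma killing_shifts_le:
  assumes "J < n" and "s \<in> set (killing_shifts J a n)"
  shows "s \<le> 2 * pi / freq a n"
proof -
  have L: "freq a n > 0" using freq_pos[OF assms(1)] .
  have "pi / (freq a n - freq a m) \<le> 2 * pi / freq a n"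
    if "J < m" "m < n" "2 * norm (a n) < norm (a m)" for m
    using freq_lt_half[OF that] L by (simp add: divide_simps)
  moreover have "pi / (freq a m + freq a n) \<le> 2 * pi / freq a n" if "J < m" for m
    using freq_pos[OF that] L by (simp add: divide_simps)
  ultimately show ?thesis
    using assms(2) L by (auto simp: killing_shifts_def divide_simps)
qed

lemma sum_killing_shifts_le:
  assumes "J < n"
  shows "sum_list (killing_shifts J a n) \<le> 16 * norm (a n)"
proof -
  have "length (killing_shifts J a n) \<le> 2 * n"
    using length_filter_le[of "\<lambda>m. 2 * norm (a n) < norm (a m)" "[Suc J..<n]"] assms
    by (simp add: killing_shifts_def)
  have "sum_list (killing_shifts J a n) \<le> (\<Sum>s\<leftarrow>killing_shifts J a n. 2 * pi / freq a n)"
    using killing_shifts_le[OF assms] by (metis sum_list_mono map_ident)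
  also have "\<dots> \<le> real (2 * n) * (2 * pi / freq a n)"
    unfolding sum_list_triv using \<open>length (killing_shifts J a n) \<le> 2 * n\<close> freq_pos[OF assms]
    by (intro mult_right_mono) auto
  also have "\<dots> = 4 * pi * norm (a n)"
    using assms norm_coeff_pos[OF assms] by (simp add: freq_def)
  also have "\<dots> \<le> 16 * norm (a n)"
    using pi_less_4 norm_coeff_pos[OF assms] by simp
  finally show ?thesis .
qed

lemma gain_0: "gain J a n 0 = 2 ^ length (killing_shifts J a n)"
  by (simp add: gain_def)

lemma gain_far_eq_0:
  assumes "J < m" and "m < n" and "2 * norm (a n) < norm (a m)"
  shows "gain J a n (freq a m - freq a n) = 0"
proof -
  have "freq a n - freq a m \<noteq> 0" using freq_lt_half[OF assms] freq_pos[of n] assms by auto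
  then have "(freq a m - freq a n) * (pi / (freq a n - freq a m)) = - pi"
    by (simp add: field_simps)
  then have "cis ((freq a m - freq a n) * (pi / (freq a n - freq a m))) = -1"
    by (simp add: complex_eq_iff)
  moreover have "pi / (freq a n - freq a m) \<in> set (killing_shifts J a n)"
    using assms by (auto simp: killing_shifts_def)
  ultimately show ?thesis
    unfolding gain_def by (simp add: shift_factor_eq_0)
qed

lemma gain_conj_eq_0:
  assumes "J < m" and "m < n"
  shows "gain J a n (- freq a m - freq a n) = 0"
proof -
  have "freq a m + freq a n \<noteq> 0" using freq_pos[of m] freq_pos[of n] assms by auto
  then have "(- freq a m - freq a n) * (pi / (freq a m + freq a n)) = - pi"
    by (simp add: field_simps)
  then have "cis ((- freq a m - freq a n) * (pi / (freq a m + freq a n))) = -1"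
    by (simp add: complex_eq_iff)
  moreover have "pi / (freq a m + freq a n) \<in> set (killing_shifts J a n)"
    using assms by (auto simp: killing_shifts_def)
  ultimately show ?thesis
    unfolding gain_def by (simp add: shift_factor_eq_0)
qed

lemma shift_sum_killing_shifts_linear:
  assumes "J < n"
  shows "shift_sum (killing_shifts J a n) (\<lambda>h. (A + of_real h * B) * cis (- freq a n * h)) = (\<lambda>h. 0)"
proof -
  have "cis (- freq a n * (pi / freq a n)) = -1"
    using freq_pos[OF assms] by (simp add: complex_eq_iff)
  then show ?thesis
    unfolding killing_shifts_def append_assoc[symmetric]
    by (intro shift_sum_append_annihilates shift_sum_linear_cis)
qed

lemma norm_gain_diff_le:
  assumes "J < n" and "J < j" and "j \<noteq> n" and "norm c \<le> norm (a j)"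
  shows "norm (c * gain J a n (freq a j - freq a n))
      \<le> 2 ^ length (killing_shifts J a n) * norm (a n) / 72 / (real j - real n)\<^sup>2"
proof (cases "j < n \<and> 2 * norm (a n) < norm (a j)")
  case True
  then show ?thesis using assms gain_far_eq_0[of j n] by simp
next
  case False
  then have "norm c \<le> 2 * norm (a n)"
    using assms norm_coeff_antimono[OF assms(1), of j] norm_coeff_pos[OF assms(1)] by fastforce
  moreover have "24 * \<bar>real j - real n\<bar> \<le> \<bar>(freq a j - freq a n) * (24 * norm (a n))\<bar>"
    using freq_diff_ge[OF assms(1,2)] norm_coeff_pos[OF assms(1)] by (simp add: abs_mult)
  ultimately have "norm (c * gain J a n (freq a j - freq a n))
      \<le> 2 * norm (a n) * 2 ^ length (killing_shifts J a n) / (144 * \<bar>real j - real n\<bar>\<^sup>2)"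
    using assms(3) by (intro norm_mult_gain_le) auto
  then show ?thesis by (simp add: mult.commute)
qed

lemma norm_gain_conj_le:
  assumes "J < n" and "J < j" and "norm c \<le> norm (a j)"
  shows "norm (c * gain J a n (- freq a j - freq a n))
      \<le> 2 ^ length (killing_shifts J a n) * norm (a n) / 72 / (real j + real n)\<^sup>2"
proof (cases "j < n")
  case True
  then show ?thesis using assms gain_conj_eq_0[of j n] by simp
next
  case False
  then have "norm c \<le> norm (a n)"
    using assms norm_coeff_antimono[OF assms(1), of j] by fastforce
  moreover have "24 * (real j + real n) \<le> \<bar>(- freq a j - freq a n) * (24 * norm (a n))\<bar>"
    using freq_add_ge[OF assms(1), of j] False norm_coeff_pos[OF assms(1)] freq_pos[OF assms(1)] freq_pos[OF assms(2)]
    by (simp add: abs_mult algebra_simps)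
  ultimately have "norm (c * gain J a n (- freq a j - freq a n))
      \<le> norm (a n) * 2 ^ length (killing_shifts J a n) / (144 * (real j + real n)\<^sup>2)"
    using assms(1) by (intro norm_mult_gain_le) auto
  also have "\<dots> \<le> 2 ^ length (killing_shifts J a n) * norm (a n) / 72 / (real j + real n)\<^sup>2"
    by (simp add: divide_simps)
  finally show ?thesis .
qed

context
  assumes summ: "(\<lambda>j. norm (a j)) summable_on {J<..}"
begin

lemma abs_summable_dominated:
  assumes "\<And>j. J < j \<Longrightarrow> norm (\<alpha> j) \<le> norm (a j)"
  shows "(\<lambda>j. norm (\<alpha> j)) summable_on {J<..}"
  using summ assms by (rule summable_on_comparison_test) auto

lemma exists_small_coeff:
  assumes "\<epsilon> > 0"
  obtains n where "J < n" and "norm (a n) < \<epsilon>"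
proof (rule ccontr)
  assume "\<not> thesis"
  with that have big: "\<epsilon> \<le> norm (a j)" if "J < j" for j
    using that by fastforce
  obtain N :: nat where N: "infsum (\<lambda>j. norm (a j)) {J<..} < real N * \<epsilon>"
    using reals_Archimedean3[OF assms] by blast
  have "real N * \<epsilon> = (\<Sum>j\<in>{J<..J + N}. \<epsilon>)" by simp
  also have "\<dots> \<le> (\<Sum>j\<in>{J<..J + N}. norm (a j))"
    by (intro sum_mono big) auto
  also have "\<dots> \<le> infsum (\<lambda>j. norm (a j)) {J<..}"
    by (rule finite_sum_le_infsum[OF summ]) auto
  finally show False using N by linarith
qed

lemma norm_gain_series_ge:
  assumes "J < n"
    and \<alpha>_le: "\<And>j. J < j \<Longrightarrow> norm (\<alpha> j) \<le> norm (a j)" and \<alpha>_ge: "norm (a n) \<le> 2 * norm (\<alpha> n)"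
    and \<beta>_le: "\<And>j. J < j \<Longrightarrow> norm (\<beta> j) \<le> norm (a j)"
  shows "2 ^ length (killing_shifts J a n) * norm (a n) * 5 / 12
      \<le> norm (\<Sum>\<^sub>\<infinity>j\<in>{J<..}. \<alpha> j * gain J a n (freq a j - freq a n) + \<beta> j * gain J a n (- freq a j - freq a n))"
proof -
  define P where "P = 2 ^ length (killing_shifts J a n) * norm (a n)"
  have summable: "(\<lambda>j. \<gamma> j * gain J a n (\<nu> j)) summable_on {J<..}"
    if "\<And>j. J < j \<Longrightarrow> norm (\<gamma> j) \<le> norm (a j)" for \<gamma> \<nu>
  proof -
    have "(\<lambda>j. norm (\<gamma> j)) summable_on {J<..}"
      by (rule abs_summable_dominated) (rule that)
    then have "(\<lambda>j. norm (\<gamma> j * gain J a n (\<nu> j))) summable_on {J<..}"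
      by (rule abs_summable_on_mult_bounded) (rule norm_gain_le)
    then show ?thesis by (rule abs_summable_summable)
  qed
  have "norm (\<alpha> n * gain J a n (freq a n - freq a n)) - 6 * (P / 72)
      \<le> norm (\<Sum>\<^sub>\<infinity>j\<in>{J<..}. \<alpha> j * gain J a n (freq a j - freq a n) + \<beta> j * gain J a n (- freq a j - freq a n))"
    using assms norm_gain_diff_le norm_gain_conj_le
    by (intro norm_infsum_ge_dominant_term summable) (auto simp: P_def)
  moreover have "norm (\<alpha> n * gain J a n (freq a n - freq a n)) \<ge> P / 2"
  proof -
    have "norm (\<alpha> n * gain J a n (freq a n - freq a n)) = 2 ^ length (killing_shifts J a n) * norm (\<alpha> n)"
      by (simp add: gain_0 norm_mult norm_power)
    then show ?thesis using \<alpha>_ge by (simp add: P_def)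
  qed
  ultimately show ?thesis unfolding P_def by linarith
qed

lemma norm_smoothing_twin_series_ge:
  assumes "J < n"
    and \<alpha>_le: "\<And>j. J < j \<Longrightarrow> norm (\<alpha> j) \<le> norm (a j)" and \<alpha>_ge: "norm (a n) \<le> 2 * norm (\<alpha> n)"
    and \<beta>_le: "\<And>j. J < j \<Longrightarrow> norm (\<beta> j) \<le> norm (a j)"
  shows "2 ^ length (killing_shifts J a n) * norm (a n) * 5 / 12
      \<le> norm (smoothing (killing_shifts J a n) (24 * norm (a n))
           (exp_series ({J<..} <+> {J<..}) (case_sum \<alpha> \<beta>)
              (case_sum (\<lambda>j. freq a j - freq a n) (\<lambda>j. - freq a j - freq a n))) 0)"
proof -
  let ?g = "\<lambda>\<gamma> \<nu> j. \<gamma> j * gain J a n (\<nu> j)"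
  let ?\<nu> = "\<lambda>j. freq a j - freq a n" and ?\<nu>' = "\<lambda>j. - freq a j - freq a n"
  have dominated: "(\<lambda>j. norm (?g \<gamma> \<nu> j)) summable_on {J<..}"
    if "\<And>j. J < j \<Longrightarrow> norm (\<gamma> j) \<le> norm (a j)" for \<gamma> \<nu>
    using abs_summable_dominated[OF that] norm_gain_le by (rule abs_summable_on_mult_bounded)
  have "(\<lambda>k. norm (case_sum \<alpha> \<beta> k)) summable_on ({J<..} <+> {J<..})"
    using abs_summable_dominated[OF \<alpha>_le] abs_summable_dominated[OF \<beta>_le]
    by (intro summable_on_Plus) (simp_all add: o_def)
  then have "smoothing (killing_shifts J a n) (24 * norm (a n))
      (exp_series ({J<..} <+> {J<..}) (case_sum \<alpha> \<beta>) (case_sum ?\<nu> ?\<nu>')) 0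
    = exp_series ({J<..} <+> {J<..}) (case_sum (?g \<alpha> ?\<nu>) (?g \<beta> ?\<nu>')) (case_sum ?\<nu> ?\<nu>') 0"
    using \<open>J < n\<close> norm_coeff_pos[of n]
    by (simp add: smoothing_exp_series gain_def[symmetric] sum.case_distrib[of "\<lambda>x. x * _"] cong: sum.case_cong)
  also have "\<dots> = (\<Sum>\<^sub>\<infinity>j\<in>{J<..}. \<alpha> j * gain J a n (?\<nu> j) + \<beta> j * gain J a n (?\<nu>' j))"
    by (subst exp_series_Plus) (simp_all add: dominated \<alpha>_le \<beta>_le)
  finally show ?thesis
    using norm_gain_series_ge[OF assms] by simp
qed

lemma not_differentiable_twin_series:
  assumes \<alpha>_le: "\<And>j. J < j \<Longrightarrow> norm (\<alpha> j) \<le> norm (a j)" and \<alpha>_ge: "\<And>j. J < j \<Longrightarrow> norm (a j) \<le> 2 * norm (\<alpha> j)"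
    and \<beta>_le: "\<And>j. J < j \<Longrightarrow> norm (\<beta> j) \<le> norm (a j)"
  shows "\<not> (\<lambda>t. \<Sum>\<^sub>\<infinity>j\<in>{J<..}. \<alpha> j * cis (freq a j * t) + \<beta> j * cis (- freq a j * t)) differentiable (at t0)"
proof
  define F where "F t = (\<Sum>\<^sub>\<infinity>j\<in>{J<..}. \<alpha> j * cis (freq a j * t) + \<beta> j * cis (- freq a j * t))" for t
  assume "(\<lambda>t. \<Sum>\<^sub>\<infinity>j\<in>{J<..}. \<alpha> j * cis (freq a j * t) + \<beta> j * cis (- freq a j * t)) differentiable (at t0)"
  then obtain D where "(F has_derivative (\<lambda>h. h *\<^sub>R D)) (at t0)"
    unfolding F_def[abs_def] vector_derivative_works has_vector_derivative_def by blast
  then obtain \<eta> where "\<eta> > 0"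
    and near: "\<And>y. norm (y - t0) < \<eta> \<Longrightarrow> norm (F y - F t0 - (y - t0) *\<^sub>R D) \<le> 1 / 1000 * norm (y - t0)"
    unfolding has_derivative_at_alt by (metis divide_pos_pos zero_less_numeral zero_less_one)
  obtain n where "J < n" and small: "norm (a n) < \<eta> / 64"
    using exists_small_coeff[of "\<eta> / 64"] \<open>\<eta> > 0\<close> by auto
  define S where "S = killing_shifts J a n"
  define L where "L = freq a n"
  define I where "I = {J<..} <+> {J<..}"
  define c where "c = case_sum (\<lambda>j. \<alpha> j * cis (freq a j * t0)) (\<lambda>j. \<beta> j * cis (- freq a j * t0))"
  define \<mu> where "\<mu> = case_sum (\<lambda>j. freq a j - L) (\<lambda>j. - freq a j - L)"
  define G where "G h = (F (t0 + h) - F t0 - of_real h * D) * cis (- L * h)" for h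
  have "F (t0 + h) * cis (- L * h) = exp_series I c \<mu> h" for h
    unfolding F_def I_def c_def \<mu>_def
    by (rule twin_series_modulate[OF abs_summable_dominated[OF \<alpha>_le] abs_summable_dominated[OF \<beta>_le]])
  then have "exp_series I c \<mu> = (\<lambda>h. G h + (F t0 + of_real h * D) * cis (- L * h))"
    by (auto simp: G_def algebra_simps)
  then have smooth_G: "smoothing S (24 * norm (a n)) (exp_series I c \<mu>) 0 = smoothing S (24 * norm (a n)) G 0"
    using shift_sum_killing_shifts_linear[OF \<open>J < n\<close>] by (simp add: smoothing_def shift_sum_add S_def L_def)
  have "norm (smoothing S (24 * norm (a n)) (exp_series I c \<mu>) 0) \<le> 2 ^ length S * (64 * norm (a n) / 1000)"
    unfolding smooth_G
  proof (rule norm_smoothing_le)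
    fix x assume x: "0 \<le> x" "x \<le> 0 + sum_list S + 2 * (24 * norm (a n))"
    then have "x \<le> 64 * norm (a n)" using sum_killing_shifts_le[OF \<open>J < n\<close>] by (simp add: S_def)
    then show "norm (G x) \<le> 64 * norm (a n) / 1000"
      using near[of "t0 + x"] x small by (simp add: G_def norm_mult scaleR_conv_of_real)
  qed (use killing_shifts_nonneg[OF \<open>J < n\<close>] norm_coeff_pos[OF \<open>J < n\<close>] in \<open>auto simp: S_def\<close>)
  moreover have "2 ^ length S * norm (a n) * 5 / 12 \<le> norm (smoothing S (24 * norm (a n)) (exp_series I c \<mu>) 0)"
    unfolding S_def I_def c_def \<mu>_def L_def
    by (rule norm_smoothing_twin_series_ge) (use \<open>J < n\<close> \<alpha>_le \<alpha>_ge \<beta>_le in \<open>auto simp: norm_mult\<close>)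
  moreover have "0 < 2 ^ length S * norm (a n)"
    using norm_coeff_pos[OF \<open>J < n\<close>] by simp
  ultimately show False by linarith
qed

lemma nd_series_terms_summable: "(\<lambda>j. a j * cis (freq a j * t)) summable_on {J<..}"
  using summ by (rule exp_series_terms_summable)

lemma not_differentiable_nd_series: "\<not> nd_series J a differentiable (at t)"
proof -
  have "nd_series J a = (\<lambda>t. \<Sum>\<^sub>\<infinity>j\<in>{J<..}. a j * cis (freq a j * t) + 0 * cis (- freq a j * t))"
    by (simp add: fun_eq_iff nd_series_eq)
  then show ?thesis
    using not_differentiable_twin_series[of a "\<lambda>_. 0"] by simp
qed

lemma not_differentiable_Re_nd_series: "\<not> (\<lambda>t. Re (nd_series J a t)) differentiable (at t)"
proof
  assume "(\<lambda>t. Re (nd_series J a t)) differentiable (at t)"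
  moreover have "(\<lambda>t. complex_of_real (Re (nd_series J a t)))
      = (\<lambda>t. \<Sum>\<^sub>\<infinity>j\<in>{J<..}. a j / 2 * cis (freq a j * t) + cnj (a j) / 2 * cis (- freq a j * t))"
    unfolding fun_eq_iff nd_series_eq of_real_Re_infsum[OF nd_series_terms_summable]
    by (intro allI infsum_cong) (simp add: cis_cnj field_simps)
  moreover have "\<not> (\<lambda>t. \<Sum>\<^sub>\<infinity>j\<in>{J<..}. a j / 2 * cis (freq a j * t) + cnj (a j) / 2 * cis (- freq a j * t))
      differentiable (at t)"
    by (rule not_differentiable_twin_series) (auto simp: norm_divide)
  ultimately show False
    using differentiable_of_real_comp by metis
qed

lemma not_differentiable_Im_nd_series: "\<not> (\<lambda>t. Im (nd_series J a t)) differentiable (at t)"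
proof
  assume "(\<lambda>t. Im (nd_series J a t)) differentiable (at t)"
  moreover have "(\<lambda>t. complex_of_real (Im (nd_series J a t)))
      = (\<lambda>t. \<Sum>\<^sub>\<infinity>j\<in>{J<..}. a j / (2 * \<i>) * cis (freq a j * t) + - cnj (a j) / (2 * \<i>) * cis (- freq a j * t))"
    unfolding fun_eq_iff nd_series_eq of_real_Im_infsum[OF nd_series_terms_summable]
    by (intro allI infsum_cong) (simp add: cis_cnj field_simps)
  moreover have "\<not> (\<lambda>t. \<Sum>\<^sub>\<infinity>j\<in>{J<..}. a j / (2 * \<i>) * cis (freq a j * t) + - cnj (a j) / (2 * \<i>) * cis (- freq a j * t))
      differentiable (at t)"
    by (rule not_differentiable_twin_series) (auto simp: norm_divide norm_mult)
  ultimately show False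
    using differentiable_of_real_comp by metis
qed

end

end

theorem corollary4p1:
  fixes J :: nat and a :: "nat \<Rightarrow> complex" and \<phi> :: "real \<Rightarrow> real"
  assumes summ: "(\<lambda>j. norm (a j)) summable_on {J<..}"
    and mono: "\<And>j. j > J \<Longrightarrow> norm (a j) \<ge> norm (a (Suc j)) \<and> norm (a (Suc j)) > 0"
    and conv: "convex_on {real J<..} \<phi>"
    and phi: "\<And>j. j > J \<Longrightarrow> \<phi> (real j) = real j / norm (a j)"
  shows "continuous_on UNIV (nd_series J a) \<and> (\<forall>t. \<not> (nd_series J a) differentiable (at t))
      \<and> continuous_on UNIV (\<lambda>t. Re (nd_series J a t)) \<and> (\<forall>t. \<not> (\<lambda>t. Re (nd_series J a t)) differentiable (at t))
      \<and> continuous_on UNIV (\<lambda>t. Im (nd_series J a t)) \<and> (\<forall>t. \<not> (\<lambda>t. Im (nd_series J a t)) differentiable (at t))"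
proof -
  have "nd_series J a = exp_series {J<..} a (freq a)"
    by (simp add: fun_eq_iff exp_series_def nd_series_eq)
  then have "continuous_on UNIV (nd_series J a)"
    using continuous_on_exp_series[OF summ] by simp
  then show ?thesis
    using not_differentiable_nd_series[OF mono summ] not_differentiable_Re_nd_series[OF mono summ]
      not_differentiable_Im_nd_series[OF mono summ]
    by (auto intro: continuous_intros)
qed

end
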